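(* Let $(f_0, M_0, \Lambda_0, \mathcal{Q}_0)$ be a SIMDG with induced set $\mathcal{P}_0$ and training distribution $P_{\mathrm{tr}}$ as in the context, and suppose $\{N(0,k^2 I_r): k\in\mathbb{N}\}\subseteq\mathcal{Q}_0$. Suppose that $\Lambda_0$ satisfies one of: (a) for $(U,V)\sim\Lambda_0$, $V$ has a density with respect to Lebesgue measure, and $\gamma_0(V)=\mathrm{E}_{P_{\mathrm{tr}}}[U\mid V]$ is almost surely bounded; (b) $\Lambda_0$ is a centered multivariate Gaussian distribution with non-degenerate covariance matrix. Then $$\inf_{P\in\mathcal{P}_0}\mathrm{E}_P\Big[\big(\mathrm{E}_P[\gamma_0(V)\mid R^\top X]-\mathrm{E}_P[\gamma_0(V)\mid X]\big)^2\Big]=0.$$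
   Context: Fix integers $p,r\ge 1$. A SIMDG is a tuple $(f_0, M_0, \Lambda_0, \mathcal{Q}_0)$ where $f_0:\mathbb{R}^p\to\mathbb{R}$ is measurable, $M_0\in\mathbb{R}^{p\times r}$, $\Lambda_0$ is a distribution on $\mathbb{R}^{1+p}$ such that $(U,V)\sim\Lambda_0$ satisfies $\mathrm{E}[(U,V)]=0$ and $\mathrm{E}[\|(U,V)\|_2^2]<\infty$, and $\mathcal{Q}_0$ is a set of distributions on $\mathbb{R}^r$. For each $Q\in\mathcal{Q}_0$ the model induces a distribution $P$ of $(U,V,X,Y,Z)$ by drawing $((U,V),Z)\sim\Lambda_0\otimes Q$ and setting $X = M_0 Z + V$, $Y = f_0(X)+U$; $\mathcal{P}_0$ is the set of all such induced distributions. Standing setting: $\sup_{P\in\mathcal{P}_0}\mathrm{E}_P[f_0(X)]^2<\infty$; $Q_{\mathrm{tr}}\in\mathcal{Q}_0$ satisfies $\mathrm{E}_{Q_{\mathrm{tr}}}[Z]=0$ and $\mathrm{E}_{Q_{\mathrm{tr}}}[ZZ^\top]\succ 0$; $P_{\mathrm{tr}}$ is the distribution induced by $Q_{\mathrm{tr}}$. Let $q=\mathrm{rank}(M_0)$; if $q<p$, $R\in\mathbb{R}^{p\times(p-q)}$ has columns forming an orthonormal basis of $\ker(M_0^\top)$, and if $q=p$, $R$ is the zero vector in $\mathbb{R}^{p\times 1}$. $\gamma_0(v):=\mathrm{E}_{P_{\mathrm{tr}}}[U\mid V=v]$ (a fixed function). *)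

theory Defs
  imports "HOL-Analysis.Analysis" "HOL-Probability.Probability"
begin

type_synonym ('p, 'r) outcome = "real \<times> (real^'p) \<times> (real^'p) \<times> real \<times> (real^'r)"

text \<open>Coordinates of an outcome (U, V, X, Y, Z).\<close>
definition obsU :: "('p::finite, 'r::finite) outcome \<Rightarrow> real" where
  "obsU w = fst w"
definition obsV :: "('p::finite, 'r::finite) outcome \<Rightarrow> real^'p" where
  "obsV w = fst (snd w)"
definition obsX :: "('p::finite, 'r::finite) outcome \<Rightarrow> real^'p" where
  "obsX w = fst (snd (snd w))"

definition simdg :: "(real^'p \<Rightarrow> real) \<Rightarrow> real^'r^'p \<Rightarrow> (real \<times> (real^'p)) measure
    \<Rightarrow> (real^'r) measure set \<Rightarrow> bool" where
  "simdg f0 M0 \<Lambda> Qs \<longleftrightarrow>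
     f0 \<in> borel_measurable borel \<and>
     prob_space \<Lambda> \<and> sets \<Lambda> = sets borel \<and>
     integrable \<Lambda> (\<lambda>w. (norm w)\<^sup>2) \<and>
     integrable \<Lambda> fst \<and> integrable \<Lambda> snd \<and>
     (\<integral>w. fst w \<partial>\<Lambda>) = 0 \<and> (\<integral>w. snd w \<partial>\<Lambda>) = 0 \<and>
     (\<forall>Q\<in>Qs. prob_space Q \<and> sets Q = sets borel)"

definition induced_dist :: "(real^'p \<Rightarrow> real) \<Rightarrow> real^'r^'p \<Rightarrow> (real \<times> (real^'p)) measure
    \<Rightarrow> (real^'r) measure \<Rightarrow> ('p::finite, 'r::finite) outcome measure" where
  "induced_dist f0 M0 \<Lambda> Q =
     distr (\<Lambda> \<Otimes>\<^sub>M Q) borel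
       (\<lambda>((u, v), z). (u, v, M0 *v z + v, f0 (M0 *v z + v) + u, z))"

definition induced_set :: "(real^'p \<Rightarrow> real) \<Rightarrow> real^'r^'p \<Rightarrow> (real \<times> (real^'p)) measure
    \<Rightarrow> (real^'r) measure set \<Rightarrow> ('p::finite, 'r::finite) outcome measure set" where
  "induced_set f0 M0 \<Lambda> Qs = induced_dist f0 M0 \<Lambda> ` Qs"

definition gauss_iso :: "real \<Rightarrow> (real^'r::finite) measure" where
  "gauss_iso k = density lborel (\<lambda>z. ennreal (\<Prod>i\<in>UNIV. normal_density 0 k (z $ i)))"

definition centered_nondeg_gaussian :: "(real \<times> (real^'p::finite)) measure \<Rightarrow> bool" where
  "centered_nondeg_gaussian \<Lambda> \<longleftrightarrow>
     (\<forall>(a::real) (b::real^'p). (a, b) \<noteq> 0 \<longrightarrow>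
        (\<exists>\<sigma>>0. distr \<Lambda> borel (\<lambda>(u, v). a * u + b \<bullet> v)
                 = density lborel (\<lambda>x. ennreal (normal_density 0 \<sigma> x))))"

text \<open>R represented by the list of its columns.  If q = rank M0 < p: p - q orthonormal
  columns spanning ker(M0^T); if q = p: the single zero column.\<close>
definition is_R :: "real^'r^'p \<Rightarrow> (real^'p::finite) list \<Rightarrow> bool" where
  "is_R M0 Rs \<longleftrightarrow>
     (rank M0 < CARD('p) \<longrightarrow>
        length Rs = CARD('p) - rank M0 \<and>
        (\<forall>i<length Rs. \<forall>j<length Rs. Rs ! i \<bullet> Rs ! j = (if i = j then 1 else 0)) \<and>
        span (set Rs) = {x. transpose M0 *v x = 0}) \<and>
     (rank M0 = CARD('p) \<longrightarrow> Rs = [0])"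

definition Rt_map :: "(real^'p::finite) list \<Rightarrow> real^'p \<Rightarrow> nat \<Rightarrow> real" where
  "Rt_map Rs x = (\<lambda>i\<in>{..<length Rs}. Rs ! i \<bullet> x)"

definition crit :: "(real^'p::finite) list \<Rightarrow> (real^'p \<Rightarrow> real)
    \<Rightarrow> ('p, 'r::finite) outcome measure \<Rightarrow> real" where
  "crit Rs g P =
     (\<integral>w. (real_cond_exp P
                 (vimage_algebra (space P) (\<lambda>w. Rt_map Rs (obsX w))
                    (PiM {..<length Rs} (\<lambda>_. borel))) (\<lambda>w. g (obsV w)) w
            - real_cond_exp P (vimage_algebra (space P) obsX borel) (\<lambda>w. g (obsV w)) w)\<^sup>2 \<partial>P)"

end

theory Submission
  imports Defs
begin

(* Use the Gaussian instruments N(0, k^2 I) in Q0.  As M0^T R = 0, R^T X = R^T V, and the part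
   v - R R^T v of the noise that R^T X does not see lies in the range of M0, say M0 a(v).  For a
   bounded h let D = h(V) - E[h(V) | R^T X] and phi(X) = E[D | X].  The squared gap between the two
   conditional expectations of h(V) is E[phi(X) D]; since D is orthogonal to functions of R^T X
   and Z is independent of V, it equals an integral over V of D times the difference of
   v |-> E[phi(X) | V = v] at v and at R R^T v.  That difference is the effect of translating
   M0 Z by M0 a(v), which for N(0, k^2 I) is at most sup |phi| * sqrt(exp(|a(v)|^2 / k^2) - 1) by the
   chi-square bound, and so vanishes as k grows.  The gap is stable in L^2, and gamma0 is square
   integrable as a conditional expectation of U, so truncating gamma0 finishes the proof. *)

section \<open>Conditional expectations and their gap\<close>

lemma measurable_vimage_algebra_fiber:
  fixes f :: "'a \<Rightarrow> 'c::t1_space"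
  assumes f: "f \<in> borel_measurable (vimage_algebra X F M)" and F: "F \<in> X \<rightarrow> space M"
    and "x \<in> X" "y \<in> X" "F x = F y"
  shows "f x = f y"
proof -
  have "f -` {f x} \<inter> X \<in> sets (vimage_algebra X F M)"
    using measurable_sets[OF f, of "{f x}"] by (simp add: borel_closed)
  then obtain A where A: "f -` {f x} \<inter> X = F -` A \<inter> X"
    by (auto simp: sets_vimage_algebra2[OF F])
  have "x \<in> F -` A \<inter> X"
    using A \<open>x \<in> X\<close> by blast
  then have "y \<in> f -` {f x} \<inter> X"
    unfolding A using \<open>F x = F y\<close> \<open>y \<in> X\<close> by simp
  then show ?thesis
    by simp
qed

lemma (in sigma_finite_subalgebra) real_cond_exp_bounded_version:
  assumes "integrable M f" and bound: "\<And>x. \<bar>f x\<bar> \<le> c"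
  obtains g where "g \<in> borel_measurable F" "\<And>x. \<bar>g x\<bar> \<le> c"
    "AE x in M. g x = real_cond_exp M F f x"
proof
  let ?g = "\<lambda>x. max (-c) (min c (real_cond_exp M F f x))"
  show "?g \<in> borel_measurable F"
    by measurable
  show "\<bar>?g x\<bar> \<le> c" for x
    using bound[of x] by auto
  have "-c \<le> f x \<and> f x \<le> c" for x
    using bound[of x] by linarith
  then have "AE x in M. real_cond_exp M F f x \<le> c" "AE x in M. -c \<le> real_cond_exp M F f x"
    by (simp_all add: real_cond_exp_le_c real_cond_exp_ge_c assms(1))
  then show "AE x in M. ?g x = real_cond_exp M F f x"
    by eventually_elim auto
qed

lemma (in finite_measure_subalgebra) real_cond_exp_square_integrable:
  assumes [measurable]: "f \<in> borel_measurable M" and f2: "integrable M (\<lambda>x. (f x)\<^sup>2)"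
  shows "integrable M (\<lambda>x. (real_cond_exp M F f x)\<^sup>2)"
    and "(\<integral>x. (real_cond_exp M F f x)\<^sup>2 \<partial>M) \<le> (\<integral>x. (f x)\<^sup>2 \<partial>M)"
proof -
  have jensen: "AE x in M. (real_cond_exp M F f x)\<^sup>2 \<le> real_cond_exp M F (\<lambda>x. (f x)\<^sup>2) x"
    by (rule real_cond_exp_jensens_inequality(2)[of f UNIV])
      (auto simp: f2 square_integrable_imp_integrable convex_power_even)
  show int: "integrable M (\<lambda>x. (real_cond_exp M F f x)\<^sup>2)"
    by (rule Bochner_Integration.integrable_bound[OF real_cond_exp_int(1)[OF f2]]) (use jensen in auto)
  have "(\<integral>x. (real_cond_exp M F f x)\<^sup>2 \<partial>M) \<le> (\<integral>x. real_cond_exp M F (\<lambda>x. (f x)\<^sup>2) x \<partial>M)"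
    by (rule integral_mono_AE[OF int real_cond_exp_int(1)[OF f2] jensen])
  also have "\<dots> = (\<integral>x. (f x)\<^sup>2 \<partial>M)"
    by (rule real_cond_exp_int(2)[OF f2])
  finally show "(\<integral>x. (real_cond_exp M F f x)\<^sup>2 \<partial>M) \<le> (\<integral>x. (f x)\<^sup>2 \<partial>M)" .
qed

lemma (in prob_space) integral_abs_le_sqrt_integral_square:
  assumes [measurable]: "f \<in> borel_measurable M" and f2: "integrable M (\<lambda>x. (f x)\<^sup>2)"
  shows "(\<integral>x. \<bar>f x\<bar> \<partial>M) \<le> sqrt (\<integral>x. (f x)\<^sup>2 \<partial>M)"
proof -
  have "0 \<le> variance (\<lambda>x. \<bar>f x\<bar>)"
    by (rule variance_positive)
  also have "\<dots> = (\<integral>x. (f x)\<^sup>2 \<partial>M) - (\<integral>x. \<bar>f x\<bar> \<partial>M)\<^sup>2"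
    using f2 by (subst variance_eq) (auto simp: square_integrable_imp_integrable)
  finally show ?thesis
    by (intro real_le_rsqrt) simp
qed

lemma (in prob_space) abs_integral_le_const:
  fixes f :: "'a \<Rightarrow> real"
  assumes [measurable]: "f \<in> borel_measurable M" and bound: "\<And>x. \<bar>f x\<bar> \<le> B"
  shows "\<bar>\<integral>x. f x \<partial>M\<bar> \<le> B"
proof -
  have "\<bar>\<integral>x. f x \<partial>M\<bar> \<le> (\<integral>x. \<bar>f x\<bar> \<partial>M)"
    by (rule integral_abs_bound)
  also have "\<dots> \<le> B"
    using bound by (intro integral_le_const integrable_const_bound[where B=B]) auto
  finally show ?thesis .
qed

lemma (in finite_measure) integrable_abs_le_const:
  fixes f :: "'a \<Rightarrow> real"
  assumes "f \<in> borel_measurable M" and "\<And>x. \<bar>f x\<bar> \<le> B"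
  shows "integrable M f"
  using assms by (intro integrable_const_bound[where B=B] AE_I2) auto

lemma power2_add_le: "((x::real) + y)\<^sup>2 \<le> 2 * x\<^sup>2 + 2 * y\<^sup>2"
  using zero_le_power2[of "x - y"] by (simp add: power2_diff power2_sum)

lemma power2_diff_le: "((x::real) - y)\<^sup>2 \<le> 2 * x\<^sup>2 + 2 * y\<^sup>2"
  using power2_add_le[of x "-y"] by simp

definition cond_exp_gap :: "'a measure \<Rightarrow> 'a measure \<Rightarrow> 'a measure \<Rightarrow> ('a \<Rightarrow> real) \<Rightarrow> real" where
  "cond_exp_gap M G F f = (\<integral>x. (real_cond_exp M G f x - real_cond_exp M F f x)\<^sup>2 \<partial>M)"

context finite_measure
begin

lemma cond_exp_gap_integrable:
  assumes "subalgebra M G" "subalgebra M F"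
    and [measurable]: "f \<in> borel_measurable M" and f2: "integrable M (\<lambda>x. (f x)\<^sup>2)"
  shows "integrable M (\<lambda>x. (real_cond_exp M G f x - real_cond_exp M F f x)\<^sup>2)"
proof -
  interpret G: finite_measure_subalgebra M G by unfold_locales fact
  interpret F: finite_measure_subalgebra M F by unfold_locales fact
  have "integrable M (\<lambda>x. 2 * (real_cond_exp M G f x)\<^sup>2 + 2 * (real_cond_exp M F f x)\<^sup>2)"
    using G.real_cond_exp_square_integrable(1) F.real_cond_exp_square_integrable(1) f2 by simp
  then show ?thesis
    by (rule Bochner_Integration.integrable_bound) (auto simp: power2_diff_le)
qed

lemma cond_exp_gap_le_integral_square:
  assumes "subalgebra M G" "subalgebra M F"
    and [measurable]: "f \<in> borel_measurable M" and f2: "integrable M (\<lambda>x. (f x)\<^sup>2)"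
  shows "cond_exp_gap M G F f \<le> 4 * (\<integral>x. (f x)\<^sup>2 \<partial>M)"
proof -
  interpret G: finite_measure_subalgebra M G by unfold_locales fact
  interpret F: finite_measure_subalgebra M F by unfold_locales fact
  have "cond_exp_gap M G F f \<le> (\<integral>x. 2 * (real_cond_exp M G f x)\<^sup>2 + 2 * (real_cond_exp M F f x)\<^sup>2 \<partial>M)"
    unfolding cond_exp_gap_def
    by (intro integral_mono cond_exp_gap_integrable assms)
      (auto simp: power2_diff_le G.real_cond_exp_square_integrable(1) F.real_cond_exp_square_integrable(1) f2)
  also have "\<dots> = 2 * (\<integral>x. (real_cond_exp M G f x)\<^sup>2 \<partial>M) + 2 * (\<integral>x. (real_cond_exp M F f x)\<^sup>2 \<partial>M)"
    by (simp add: G.real_cond_exp_square_integrable(1) F.real_cond_exp_square_integrable(1) f2)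
  also have "\<dots> \<le> 4 * (\<integral>x. (f x)\<^sup>2 \<partial>M)"
    using G.real_cond_exp_square_integrable(2)[OF _ f2] F.real_cond_exp_square_integrable(2)[OF _ f2]
    by simp
  finally show ?thesis .
qed

lemma square_integrable_diff:
  fixes f h :: "'a \<Rightarrow> real"
  assumes [measurable]: "f \<in> borel_measurable M" "h \<in> borel_measurable M"
    and f2: "integrable M (\<lambda>x. (f x)\<^sup>2)" and h2: "integrable M (\<lambda>x. (h x)\<^sup>2)"
  shows "integrable M (\<lambda>x. (f x - h x)\<^sup>2)"
proof (rule Bochner_Integration.integrable_bound)
  show "integrable M (\<lambda>x. 2 * (f x)\<^sup>2 + 2 * (h x)\<^sup>2)"
    using f2 h2 by simp
qed (auto simp: power2_diff_le)

lemma cond_exp_gap_add_le: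
  assumes "subalgebra M G" "subalgebra M F"
    and [measurable]: "f \<in> borel_measurable M" "h \<in> borel_measurable M"
    and f2: "integrable M (\<lambda>x. (f x)\<^sup>2)" and h2: "integrable M (\<lambda>x. (h x)\<^sup>2)"
  shows "cond_exp_gap M G F (\<lambda>x. f x + h x) \<le> 2 * cond_exp_gap M G F f + 2 * cond_exp_gap M G F h"
proof -
  interpret G: finite_measure_subalgebra M G by unfold_locales fact
  interpret F: finite_measure_subalgebra M F by unfold_locales fact
  let ?d = "\<lambda>f x. real_cond_exp M G f x - real_cond_exp M F f x"
  have fh2: "integrable M (\<lambda>x. (f x + h x)\<^sup>2)"
    using square_integrable_diff[of f "\<lambda>x. - h x"] f2 h2 by simp
  have "AE x in M. real_cond_exp M G (\<lambda>x. f x + h x) x = real_cond_exp M G f x + real_cond_exp M G h x"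
    "AE x in M. real_cond_exp M F (\<lambda>x. f x + h x) x = real_cond_exp M F f x + real_cond_exp M F h x"
    using f2 h2 by (auto intro!: G.real_cond_exp_add F.real_cond_exp_add square_integrable_imp_integrable)
  then have "AE x in M. (?d (\<lambda>x. f x + h x) x)\<^sup>2 \<le> 2 * (?d f x)\<^sup>2 + 2 * (?d h x)\<^sup>2"
  proof eventually_elim
    case (elim x)
    show ?case
      unfolding elim using power2_add_le[of "?d f x" "?d h x"] by (simp add: algebra_simps)
  qed
  then have "cond_exp_gap M G F (\<lambda>x. f x + h x) \<le> (\<integral>x. 2 * (?d f x)\<^sup>2 + 2 * (?d h x)\<^sup>2 \<partial>M)"
    unfolding cond_exp_gap_def
    by (intro integral_mono_AE cond_exp_gap_integrable Bochner_Integration.integrable_add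
        integrable_mult_right assms fh2) auto
  also have "\<dots> = 2 * cond_exp_gap M G F f + 2 * cond_exp_gap M G F h"
    unfolding cond_exp_gap_def using cond_exp_gap_integrable[OF assms(1,2)] f2 h2 by simp
  finally show ?thesis .
qed

lemma cond_exp_gap_perturb_le:
  assumes "subalgebra M G" "subalgebra M F"
    and [measurable]: "f \<in> borel_measurable M" "h \<in> borel_measurable M"
    and f2: "integrable M (\<lambda>x. (f x)\<^sup>2)" and h2: "integrable M (\<lambda>x. (h x)\<^sup>2)"
  shows "cond_exp_gap M G F f \<le> 2 * cond_exp_gap M G F h + 8 * (\<integral>x. (f x - h x)\<^sup>2 \<partial>M)"
proof -
  have d2: "integrable M (\<lambda>x. (f x - h x)\<^sup>2)"
    by (rule square_integrable_diff) (use f2 h2 in simp_all)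
  have "cond_exp_gap M G F f = cond_exp_gap M G F (\<lambda>x. h x + (f x - h x))"
    by simp
  also have "\<dots> \<le> 2 * cond_exp_gap M G F h + 2 * cond_exp_gap M G F (\<lambda>x. f x - h x)"
    by (rule cond_exp_gap_add_le) (use assms d2 in auto)
  also have "cond_exp_gap M G F (\<lambda>x. f x - h x) \<le> 4 * (\<integral>x. (f x - h x)\<^sup>2 \<partial>M)"
    by (rule cond_exp_gap_le_integral_square) (use assms d2 in auto)
  finally show ?thesis
    by simp
qed

lemma integral_mult_cond_exp_residual:
  assumes G: "subalgebra M G"
    and [measurable]: "H \<in> borel_measurable M" "g \<in> borel_measurable G" "Y \<in> borel_measurable G"
    and bounds: "\<And>x. \<bar>H x\<bar> \<le> B" "\<And>x. \<bar>g x\<bar> \<le> B" "\<And>x. \<bar>Y x\<bar> \<le> B"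
    and Y: "AE x in M. Y x = real_cond_exp M G H x"
  shows "(\<integral>x. g x * (H x - Y x) \<partial>M) = 0"
proof -
  interpret G: finite_measure_subalgebra M G by unfold_locales fact
  have [measurable]: "g \<in> borel_measurable M" "Y \<in> borel_measurable M"
    by (simp_all add: measurable_from_subalg[OF G])
  have prod_le: "\<bar>g x * H x\<bar> \<le> B * B" "\<bar>g x * Y x\<bar> \<le> B * B" for x
    unfolding abs_mult using bounds[of x] by (auto intro!: mult_mono)
  have gH: "integrable M (\<lambda>x. g x * H x)"
    by (rule integrable_abs_le_const[OF _ prod_le(1)]) measurable
  have gY: "integrable M (\<lambda>x. g x * Y x)"
    by (rule integrable_abs_le_const[OF _ prod_le(2)]) measurable
  have "(\<integral>x. g x * Y x \<partial>M) = (\<integral>x. g x * real_cond_exp M G H x \<partial>M)"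
    by (intro integral_cong_AE) (use Y in auto)
  also have "\<dots> = (\<integral>x. g x * H x \<partial>M)"
    by (rule G.real_cond_exp_intg(2)[OF gH]) measurable
  finally show ?thesis
    using gH gY by (simp add: right_diff_distrib)
qed

(* H - Y is orthogonal to every bounded G-measurable g, so g may be subtracted from Q at no cost. *)
lemma cond_exp_gap_eq_integral_residual:
  assumes F: "subalgebra M F" and GF: "subalgebra F G"
    and [measurable]: "H \<in> borel_measurable M" "Y \<in> borel_measurable G" "Q \<in> borel_measurable F"
      "g \<in> borel_measurable G"
    and bounds: "\<And>x. \<bar>H x\<bar> \<le> B" "\<And>x. \<bar>Y x\<bar> \<le> B" "\<And>x. \<bar>Q x\<bar> \<le> B" "\<And>x. \<bar>g x\<bar> \<le> B"
    and Y: "AE x in M. Y x = real_cond_exp M G H x"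
    and Q: "AE x in M. Q x = real_cond_exp M F (\<lambda>x. H x - Y x) x"
  shows "cond_exp_gap M G F H = (\<integral>x. (Q x - g x) * (H x - Y x) \<partial>M)"
proof -
  interpret F: finite_measure_subalgebra M F by unfold_locales fact
  have GM: "subalgebra M G"
    using F GF unfolding subalgebra_def by auto
  have YF [measurable]: "Y \<in> borel_measurable F"
    by (rule measurable_from_subalg[OF GF]) measurable
  have [measurable]: "Y \<in> borel_measurable M" "Q \<in> borel_measurable M" "g \<in> borel_measurable M"
    by (simp_all add: measurable_from_subalg[OF F] measurable_from_subalg[OF GM])
  have H: "integrable M H" and Y_int: "integrable M Y"
    by (rule integrable_abs_le_const[OF _ bounds(1)] integrable_abs_le_const[OF _ bounds(2)]; measurable)+
  have times_residual: "\<bar>f x * (H x - Y x)\<bar> \<le> B * (B + B)" if "\<bar>f x\<bar> \<le> B" for f :: "'a \<Rightarrow> real" and x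
  proof -
    have "\<bar>H x - Y x\<bar> \<le> B + B"
      using abs_triangle_ineq4[of "H x" "Y x"] bounds(1,2)[of x] by linarith
    then show ?thesis
      unfolding abs_mult using that by (intro mult_mono) auto
  qed
  have QHY: "integrable M (\<lambda>x. Q x * (H x - Y x))"
    by (rule integrable_abs_le_const[OF _ times_residual[OF bounds(3)]]) measurable
  have gHY: "integrable M (\<lambda>x. g x * (H x - Y x))"
    by (rule integrable_abs_le_const[OF _ times_residual[OF bounds(4)]]) measurable
  have "AE x in M. real_cond_exp M F (\<lambda>x. H x - Y x) x = real_cond_exp M F H x - Y x"
    using F.real_cond_exp_diff[OF H Y_int] F.real_cond_exp_F_meas[OF Y_int YF] by eventually_elim simp
  then have "AE x in M. (real_cond_exp M G H x - real_cond_exp M F H x)\<^sup>2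
      = Q x * real_cond_exp M F (\<lambda>x. H x - Y x) x"
    using Y Q by eventually_elim (metis power2_commute power2_eq_square)
  then have "cond_exp_gap M G F H = (\<integral>x. Q x * real_cond_exp M F (\<lambda>x. H x - Y x) x \<partial>M)"
    unfolding cond_exp_gap_def by (rule integral_cong_AE[rotated 2]) measurable
  also have "\<dots> = (\<integral>x. Q x * (H x - Y x) \<partial>M)"
    by (rule F.real_cond_exp_intg(2)[OF QHY]) measurable
  also have "\<dots> = (\<integral>x. (Q x - g x) * (H x - Y x) \<partial>M)"
    using integral_mult_cond_exp_residual[OF GM _ _ _ bounds(1,4,2) Y] QHY gHY
    by (simp add: left_diff_distrib)
  finally show ?thesis .
qed

end

section \<open>Limits by dominated convergence\<close>

lemma tendsto_integral_truncation_error: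
  fixes f :: "'a \<Rightarrow> real"
  assumes [measurable]: "f \<in> borel_measurable M" and f2: "integrable M (\<lambda>x. (f x)\<^sup>2)"
  shows "(\<lambda>n. \<integral>x. (f x - max (- real n) (min (real n) (f x)))\<^sup>2 \<partial>M) \<longlonglongrightarrow> 0"
proof -
  have "(\<lambda>n. \<integral>x. (f x - max (- real n) (min (real n) (f x)))\<^sup>2 \<partial>M) \<longlonglongrightarrow> (\<integral>x. 0 \<partial>M)"
  proof (rule integral_dominated_convergence[OF _ _ f2])
    show "AE x in M. (\<lambda>n. (f x - max (- real n) (min (real n) (f x)))\<^sup>2) \<longlonglongrightarrow> 0"
    proof (intro AE_I2 tendsto_eventually eventually_sequentiallyI)
      fix x n assume "nat \<lceil>\<bar>f x\<bar>\<rceil> \<le> n"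
      then have "\<bar>f x\<bar> \<le> real n"
        by linarith
      then show "(f x - max (- real n) (min (real n) (f x)))\<^sup>2 = 0"
        by auto
    qed
    show "AE x in M. norm ((f x - max (- real n) (min (real n) (f x)))\<^sup>2) \<le> (f x)\<^sup>2" for n
      by (intro AE_I2) (simp add: abs_le_square_iff[symmetric])
  qed simp_all
  then show ?thesis
    by simp
qed

lemma (in finite_measure) tendsto_integral_mult_min:
  fixes u :: "nat \<Rightarrow> 'a \<Rightarrow> real"
  assumes [measurable]: "\<And>n. u n \<in> borel_measurable M"
    and u: "\<And>x. (\<lambda>n. u n x) \<longlonglongrightarrow> 0" "\<And>n x. 0 \<le> u n x" and D: "0 \<le> D"
  shows "(\<lambda>n. \<integral>x. C * min D (u n x) \<partial>M) \<longlonglongrightarrow> 0"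
proof -
  have "(\<lambda>n. \<integral>x. C * min D (u n x) \<partial>M) \<longlonglongrightarrow> (\<integral>x. C * min D 0 \<partial>M)"
  proof (rule integral_dominated_convergence[where w="\<lambda>_. \<bar>C\<bar> * D"])
    show "AE x in M. (\<lambda>n. C * min D (u n x)) \<longlonglongrightarrow> C * min D 0"
      by (intro AE_I2 tendsto_intros u)
    show "AE x in M. norm (C * min D (u n x)) \<le> \<bar>C\<bar> * D" for n
      using u(2) D by (intro AE_I2) (simp add: abs_mult mult_left_mono)
  qed simp_all
  then show ?thesis
    using D by simp
qed

section \<open>Translating an isotropic Gaussian\<close>

definition translation_modulus :: "('a::real_normed_vector) measure \<Rightarrow> ('a \<Rightarrow> real) \<Rightarrow> bool" where
  "translation_modulus N \<delta> \<longleftrightarrow> (\<forall>\<phi> B b. \<phi> \<in> borel_measurable borel \<longrightarrow> (\<forall>z. \<bar>\<phi> z\<bar> \<le> B) \<longrightarrow>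
     \<bar>(\<integral>z. \<phi> (z + b) \<partial>N) - (\<integral>z. \<phi> z \<partial>N)\<bar> \<le> B * \<delta> b)"

lemma translation_modulus_nonneg: "translation_modulus N \<delta> \<Longrightarrow> 0 \<le> \<delta> b"
  unfolding translation_modulus_def by (elim allE[of _ "\<lambda>_. 1"] allE[of _ 1] allE[of _ b]) simp

lemma lborel_integral_translate:
  fixes F :: "'a::euclidean_space \<Rightarrow> real"
  assumes [measurable]: "F \<in> borel_measurable borel"
  shows "(\<integral>x. F (c + x) \<partial>lborel) = (\<integral>x. F x \<partial>lborel)"
  by (subst lborel_distr_plus[symmetric, of c], subst integral_distr) auto

lemma lborel_integrable_translate:
  fixes F :: "'a::euclidean_space \<Rightarrow> real"
  assumes [measurable]: "F \<in> borel_measurable borel" and "integrable lborel F"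
  shows "integrable lborel (\<lambda>x. F (c + x))"
  using assms(2) by (subst (asm) lborel_distr_plus[symmetric, of c], subst (asm) integrable_distr_eq) auto

lemma (in prob_space) chi_square_integral_diff_le:
  assumes [measurable]: "L \<in> borel_measurable M" "\<phi> \<in> borel_measurable M"
    and L2: "integrable M (\<lambda>x. (L x)\<^sup>2)" and L1: "(\<integral>x. L x \<partial>M) = 1"
    and \<phi>: "\<And>x. \<bar>\<phi> x\<bar> \<le> B"
  shows "\<bar>(\<integral>x. L x * \<phi> x \<partial>M) - (\<integral>x. \<phi> x \<partial>M)\<bar> \<le> B * sqrt ((\<integral>x. (L x)\<^sup>2 \<partial>M) - 1)"
proof -
  have L: "integrable M L"
    using L2 by (simp add: square_integrable_imp_integrable)
  have B: "0 \<le> B"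
    using \<phi>[of undefined] by linarith
  have \<phi>_int: "integrable M \<phi>"
    by (rule integrable_const_bound[where B=B]) (auto simp: \<phi>)
  have "norm (L x * \<phi> x) \<le> B * \<bar>L x\<bar>" for x
    using mult_left_mono[OF \<phi>[of x] abs_ge_zero[of "L x"]] by (simp add: abs_mult mult.commute)
  then have L\<phi>: "integrable M (\<lambda>x. L x * \<phi> x)"
    by (intro Bochner_Integration.integrable_bound[OF integrable_mult_right[OF integrable_abs[OF L], of B]])
      (auto intro: order_trans[OF _ abs_ge_self])
  have L1_2: "integrable M (\<lambda>x. (L x - 1)\<^sup>2)"
    using L L2 by (simp add: power2_diff)
  have L1\<phi>: "integrable M (\<lambda>x. (L x - 1) * \<phi> x)"
    using L\<phi> \<phi>_int by (simp add: left_diff_distrib)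
  have "\<bar>(\<integral>x. L x * \<phi> x \<partial>M) - (\<integral>x. \<phi> x \<partial>M)\<bar> = \<bar>\<integral>x. (L x - 1) * \<phi> x \<partial>M\<bar>"
    using L\<phi> \<phi>_int by (simp add: left_diff_distrib)
  also have "\<dots> \<le> (\<integral>x. \<bar>(L x - 1) * \<phi> x\<bar> \<partial>M)"
    by (rule integral_abs_bound)
  also have "\<dots> \<le> (\<integral>x. \<bar>L x - 1\<bar> * B \<partial>M)"
    using L by (intro integral_mono integrable_abs L1\<phi>) (auto simp: abs_mult intro!: mult_left_mono \<phi>)
  also have "\<dots> = B * (\<integral>x. \<bar>L x - 1\<bar> \<partial>M)"
    by (simp add: mult.commute)
  also have "\<dots> \<le> B * sqrt (\<integral>x. (L x - 1)\<^sup>2 \<partial>M)"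
    by (intro mult_left_mono integral_abs_le_sqrt_integral_square L1_2 B) measurable
  also have "(\<integral>x. (L x - 1)\<^sup>2 \<partial>M) = (\<integral>x. (L x)\<^sup>2 \<partial>M) - 1"
    using L L2 L1 by (simp add: power2_diff prob_space)
  finally show ?thesis .
qed

definition iso_normal_density :: "real \<Rightarrow> real^'r::finite \<Rightarrow> real" where
  "iso_normal_density k z = (\<Prod>i\<in>UNIV. normal_density 0 k (z $ i))"

(* The square root of the chi-square divergence of N(b, k^2 I) from N(0, k^2 I). *)
definition gauss_shift_modulus :: "real \<Rightarrow> 'a::real_normed_vector \<Rightarrow> real" where
  "gauss_shift_modulus k b = sqrt (exp ((norm b / k)\<^sup>2) - 1)"

lemma gauss_iso_eq_density: "gauss_iso k = density lborel (\<lambda>z. ennreal (iso_normal_density k z))"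
  unfolding gauss_iso_def iso_normal_density_def ..

lemma iso_normal_density_pos: "k > 0 \<Longrightarrow> iso_normal_density k z > 0"
  unfolding iso_normal_density_def by (intro prod_pos) (simp add: normal_density_pos)

lemma borel_measurable_iso_normal_density [measurable]: "iso_normal_density k \<in> borel_measurable borel"
  unfolding iso_normal_density_def by measurable

lemma normal_density_shift_square:
  fixes k x b :: real
  assumes k: "k > 0"
  shows "(normal_density 0 k (x - b))\<^sup>2 / normal_density 0 k x = exp ((b / k)\<^sup>2) * normal_density 0 k (x - 2 * b)"
proof -
  define c where "c = 1 / sqrt (2 * pi * k\<^sup>2)"
  have c: "c > 0"
    using k unfolding c_def by simp
  have "(normal_density 0 k (x - b))\<^sup>2 / normal_density 0 k x
      = c * (exp (- (x - b)\<^sup>2 / (2 * k\<^sup>2)))\<^sup>2 / exp (- x\<^sup>2 / (2 * k\<^sup>2))"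
    unfolding normal_density_def c_def[symmetric] using c by (simp add: power2_eq_square)
  also have "\<dots> = c * exp (2 * (- (x - b)\<^sup>2 / (2 * k\<^sup>2)) - (- x\<^sup>2 / (2 * k\<^sup>2)))"
    by (metis exp_diff exp_double times_divide_eq_right)
  also have "2 * (- (x - b)\<^sup>2 / (2 * k\<^sup>2)) - (- x\<^sup>2 / (2 * k\<^sup>2)) = (b / k)\<^sup>2 + - (x - 2 * b)\<^sup>2 / (2 * k\<^sup>2)"
    using k by (simp add: field_simps power2_eq_square)
  finally show ?thesis
    unfolding normal_density_def c_def[symmetric] by (simp add: exp_add[symmetric])
qed

lemma iso_normal_density_shift_square:
  assumes k: "k > 0"
  shows "(iso_normal_density k (z - a))\<^sup>2 / iso_normal_density k z
    = exp ((norm a / k)\<^sup>2) * iso_normal_density k (z - 2 *\<^sub>R a)"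
proof -
  have "(iso_normal_density k (z - a))\<^sup>2 / iso_normal_density k z
      = (\<Prod>i\<in>UNIV. (normal_density 0 k (z $ i - a $ i))\<^sup>2 / normal_density 0 k (z $ i))"
    unfolding iso_normal_density_def by (simp add: prod_dividef prod_power_distrib)
  also have "\<dots> = (\<Prod>i\<in>UNIV. exp ((a $ i / k)\<^sup>2) * normal_density 0 k (z $ i - 2 * a $ i))"
    by (simp add: normal_density_shift_square[OF k])
  also have "\<dots> = exp (\<Sum>i\<in>UNIV. (a $ i / k)\<^sup>2) * iso_normal_density k (z - 2 *\<^sub>R a)"
    unfolding iso_normal_density_def by (simp add: prod.distrib exp_sum)
  also have "(\<Sum>i\<in>UNIV. (a $ i / k)\<^sup>2) = (norm a / k)\<^sup>2"
    unfolding power2_norm_eq_inner inner_vec_def power_divide sum_divide_distrib[symmetric]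
    by (simp add: power2_eq_square)
  finally show ?thesis .
qed

context
  fixes k :: real
  assumes k: "k > 0"
begin

lemma integral_gauss_iso:
  assumes [measurable]: "f \<in> borel_measurable borel"
  shows "(\<integral>z. f z \<partial>gauss_iso k) = (\<integral>z. iso_normal_density k z * f z \<partial>lborel)"
  unfolding gauss_iso_eq_density
  by (subst integral_density) (auto intro: less_imp_le[OF iso_normal_density_pos[OF k]])

lemma integrable_gauss_iso_iff:
  assumes [measurable]: "f \<in> borel_measurable borel"
  shows "integrable (gauss_iso k) f \<longleftrightarrow> integrable lborel (\<lambda>z. iso_normal_density k z * f z)"
  unfolding gauss_iso_eq_density
  by (subst integrable_density) (auto intro: less_imp_le[OF iso_normal_density_pos[OF k]])

lemma iso_normal_density_translate:
  fixes c :: "real^'r::finite"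
  assumes "prob_space (gauss_iso k :: (real^'r) measure)"
  shows "integrable lborel (\<lambda>z. iso_normal_density k (z - c))"
    and "(\<integral>z. iso_normal_density k (z - c) \<partial>lborel) = 1"
proof -
  interpret N: prob_space "gauss_iso k :: (real^'r) measure" by (fact assms)
  have int: "integrable lborel (iso_normal_density k :: real^'r \<Rightarrow> real)"
    using integrable_gauss_iso_iff[of "\<lambda>_::real^'r. 1"] by simp
  have one: "(\<integral>z. iso_normal_density k (z :: real^'r) \<partial>lborel) = 1"
    using integral_gauss_iso[of "\<lambda>_::real^'r. 1"] N.prob_space by simp
  show "integrable lborel (\<lambda>z. iso_normal_density k (z - c))"
    using lborel_integrable_translate[OF _ int, of "- c"] by simp
  show "(\<integral>z. iso_normal_density k (z - c) \<partial>lborel) = 1"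
    using lborel_integral_translate[of "\<lambda>z. iso_normal_density k (z - c)" c] one by simp
qed

lemma translation_modulus_gauss_iso:
  assumes prob: "prob_space (gauss_iso k :: (real^'r::finite) measure)"
  shows "translation_modulus (gauss_iso k :: (real^'r) measure) (gauss_shift_modulus k)"
  unfolding translation_modulus_def
proof (intro allI impI)
  fix \<phi> :: "real^'r \<Rightarrow> real" and B :: real and a :: "real^'r"
  assume [measurable]: "\<phi> \<in> borel_measurable borel" and \<phi>: "\<forall>z. \<bar>\<phi> z\<bar> \<le> B"
  interpret N: prob_space "gauss_iso k :: (real^'r) measure" by (fact prob)
  have [measurable_cong]: "sets (gauss_iso k :: (real^'r) measure) = sets borel"
    unfolding gauss_iso_eq_density by simp
  define L where "L z = iso_normal_density k (z - a) / iso_normal_density k z" for z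
  have [measurable]: "L \<in> borel_measurable borel"
    unfolding L_def by measurable
  have dens_L: "iso_normal_density k z * L z = iso_normal_density k (z - a)" for z
    unfolding L_def using iso_normal_density_pos[OF k, of z] by simp
  have dens_L2: "iso_normal_density k z * (L z)\<^sup>2 = exp ((norm a / k)\<^sup>2) * iso_normal_density k (z - 2 *\<^sub>R a)" for z
    using iso_normal_density_pos[OF k, of z] iso_normal_density_shift_square[OF k, of z a]
    unfolding L_def by (simp add: power2_eq_square field_simps)
  have "(\<integral>z. \<phi> (z + a) \<partial>gauss_iso k) = (\<integral>z. iso_normal_density k (a + z - a) * \<phi> (a + z) \<partial>lborel)"
    by (simp add: integral_gauss_iso add.commute)
  also have "\<dots> = (\<integral>z. iso_normal_density k (z - a) * \<phi> z \<partial>lborel)"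
    by (rule lborel_integral_translate[of "\<lambda>z. iso_normal_density k (z - a) * \<phi> z"]) measurable
  also have "\<dots> = (\<integral>z. L z * \<phi> z \<partial>gauss_iso k)"
    by (simp add: integral_gauss_iso dens_L mult.assoc[symmetric])
  finally have "\<bar>(\<integral>z. \<phi> (z + a) \<partial>gauss_iso k) - (\<integral>z. \<phi> z \<partial>gauss_iso k)\<bar>
      = \<bar>(\<integral>z. L z * \<phi> z \<partial>gauss_iso k) - (\<integral>z. \<phi> z \<partial>gauss_iso k)\<bar>"
    by simp
  also have "\<dots> \<le> B * sqrt ((\<integral>z. (L z)\<^sup>2 \<partial>gauss_iso k) - 1)"
  proof (rule N.chi_square_integral_diff_le)
    show "integrable (gauss_iso k) (\<lambda>z. (L z)\<^sup>2)"
      using iso_normal_density_translate(1)[OF prob, of "2 *\<^sub>R a"] by (simp add: integrable_gauss_iso_iff dens_L2)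
    show "(\<integral>z. L z \<partial>gauss_iso k) = 1"
      using iso_normal_density_translate(2)[OF prob, of a] by (simp add: integral_gauss_iso dens_L)
  qed (use \<phi> in simp_all)
  also have "(\<integral>z. (L z)\<^sup>2 \<partial>gauss_iso k) = exp ((norm a / k)\<^sup>2)"
    using iso_normal_density_translate(2)[OF prob, of "2 *\<^sub>R a"] by (simp add: integral_gauss_iso dens_L2)
  finally show "\<bar>(\<integral>z. \<phi> (z + a) \<partial>gauss_iso k) - (\<integral>z. \<phi> z \<partial>gauss_iso k)\<bar> \<le> B * gauss_shift_modulus k a"
    unfolding gauss_shift_modulus_def .
qed

end

lemma gauss_shift_modulus_nonneg: "0 \<le> gauss_shift_modulus k b"
  unfolding gauss_shift_modulus_def by simp

lemma borel_measurable_gauss_shift_modulus [measurable]: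
  "gauss_shift_modulus k \<in> borel_measurable (borel :: 'a::real_normed_vector measure)"
  unfolding gauss_shift_modulus_def[abs_def] by measurable

lemma tendsto_gauss_shift_modulus: "(\<lambda>n. gauss_shift_modulus (real (Suc n)) b) \<longlonglongrightarrow> 0"
proof -
  have "(\<lambda>n. norm b * inverse (real (Suc n))) \<longlonglongrightarrow> norm b * 0"
    by (intro tendsto_intros LIMSEQ_inverse_real_of_nat)
  then have "(\<lambda>n. sqrt (exp ((norm b / real (Suc n))\<^sup>2) - 1)) \<longlonglongrightarrow> sqrt (exp (0\<^sup>2) - 1)"
    by (intro tendsto_intros) (simp add: divide_inverse)
  then show ?thesis
    by (simp add: gauss_shift_modulus_def)
qed

section \<open>The projection onto the kernel of M0 transposed\<close>

(* R R^T v, the orthogonal projection onto ker (M0^T); it is 0 when rank M0 = p, where R = [0]. *)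
definition Rproj :: "(real^'p::finite) list \<Rightarrow> real^'p \<Rightarrow> real^'p" where
  "Rproj Rs v = (\<Sum>i<length Rs. (Rs ! i \<bullet> v) *\<^sub>R Rs ! i)"

lemma Rproj_eq_sum_Rt_map: "Rproj Rs x = (\<Sum>i<length Rs. Rt_map Rs x i *\<^sub>R Rs ! i)"
  unfolding Rproj_def Rt_map_def by simp

lemma is_R_span:
  fixes M0 :: "real^'r::finite^'p::finite"
  assumes "is_R M0 Rs"
  shows "span (set Rs) = (range ((*v) M0))\<^sup>\<bottom>"
proof -
  have "(\<lambda>x. transpose M0 *v x) -` {0} = (range (adjoint (\<lambda>x. transpose M0 *v x)))\<^sup>\<bottom>"
    by (rule ker_orthogonal_comp_adjoint) (rule matrix_vector_mul_linear)
  then have ker: "{x. transpose M0 *v x = 0} = (range ((*v) M0))\<^sup>\<bottom>"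
    by (simp only: adjoint_matrix transpose_transpose vimage_def singleton_iff)
  show ?thesis
  proof (cases "rank M0 = CARD('p)")
    case True
    then have "range ((*v) M0) = UNIV" and "Rs = [0]"
      using assms full_rank_surjective[of M0] unfolding is_R_def by auto
    then show ?thesis
      by simp
  next
    case False
    then show ?thesis
      using assms rank_bound[of M0] ker unfolding is_R_def by auto
  qed
qed

lemma is_R_inner_Rproj:
  fixes M0 :: "real^'r::finite^'p::finite"
  assumes R: "is_R M0 Rs" and i: "i < length Rs"
  shows "Rs ! i \<bullet> Rproj Rs v = Rs ! i \<bullet> v"
proof (cases "rank M0 = CARD('p)")
  case True
  then show ?thesis
    using R i unfolding is_R_def Rproj_def by auto
next
  case False
  then have on: "j < length Rs \<Longrightarrow> Rs ! i \<bullet> Rs ! j = (if i = j then 1 else 0)" for j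
    using R i rank_bound[of M0] unfolding is_R_def by auto
  have "Rs ! i \<bullet> Rproj Rs v = (\<Sum>j<length Rs. (Rs ! j \<bullet> v) * (if i = j then 1 else 0))"
    unfolding Rproj_def inner_sum_right by (intro sum.cong) (auto simp: on)
  also have "\<dots> = Rs ! i \<bullet> v"
    using i by (simp add: if_distrib cong: if_cong)
  finally show ?thesis .
qed

lemma Rt_map_Rproj:
  fixes M0 :: "real^'r::finite^'p::finite"
  assumes "is_R M0 Rs"
  shows "Rt_map Rs (Rproj Rs x) = Rt_map Rs x"
  unfolding Rt_map_def using is_R_inner_Rproj[OF assms] by (intro restrict_ext) auto

lemma Rproj_translate:
  fixes M0 :: "real^'r::finite^'p::finite"
  assumes "is_R M0 Rs"
  shows "Rproj Rs (M0 *v z + v) = Rproj Rs v"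
proof -
  have "Rs ! i \<bullet> (M0 *v z) = 0" if "i < length Rs" for i
    using is_R_span[OF assms] span_base[of "Rs ! i" "set Rs"] that
    by (auto simp: orthogonal_comp_def orthogonal_def inner_commute)
  then show ?thesis
    unfolding Rproj_def by (intro sum.cong) (auto simp: inner_add_right)
qed

lemma diff_Rproj_in_range:
  fixes M0 :: "real^'r::finite^'p::finite"
  assumes R: "is_R M0 Rs"
  shows "v - Rproj Rs v \<in> range ((*v) M0)"
proof -
  have "orthogonal r (v - Rproj Rs v)" if "r \<in> set Rs" for r
    using that is_R_inner_Rproj[OF R] by (auto simp: in_set_conv_nth orthogonal_def inner_diff_right)
  then have "v - Rproj Rs v \<in> (span (set Rs))\<^sup>\<bottom>"
    unfolding orthogonal_comp_def using orthogonal_to_span orthogonal_commute by blast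
  also have "\<dots> = range ((*v) M0)"
    unfolding is_R_span[OF R]
    by (rule orthogonal_comp_self[OF linear_subspace_image[OF matrix_vector_mul_linear subspace_UNIV]])
  finally show ?thesis .
qed

lemma linear_Rproj: "linear (Rproj Rs)"
  by (auto simp: linear_iff Rproj_def inner_add_right scaleR_add_left sum.distrib scaleR_sum_right)

lemma exists_linear_preimage_diff_Rproj:
  fixes M0 :: "real^'r::finite^'p::finite"
  assumes "is_R M0 Rs"
  obtains a where "linear a" "\<And>v. M0 *v a v = v - Rproj Rs v"
proof -
  obtain A where "linear A" and A: "\<forall>u\<in>range ((*v) M0). M0 *v A u = u"
    using linear_exists_right_inverse_on[OF matrix_vector_mul_linear subspace_UNIV, of M0] by auto
  have "linear (\<lambda>v. A (v - Rproj Rs v))"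
    using linear_compose[OF linear_compose_sub[OF linear_id linear_Rproj] \<open>linear A\<close>]
    by (simp add: o_def id_def)
  then show ?thesis
    using that A diff_Rproj_in_range[OF assms] by blast
qed

section \<open>The distribution induced by an instrument distribution\<close>

definition outcome_map :: "(real^'p::finite \<Rightarrow> real) \<Rightarrow> real^'r::finite^'p
    \<Rightarrow> (real \<times> (real^'p)) \<times> (real^'r) \<Rightarrow> ('p, 'r) outcome" where
  "outcome_map f0 M0 x = (let u = fst (fst x); v = snd (fst x); z = snd x
     in (u, v, M0 *v z + v, f0 (M0 *v z + v) + u, z))"

definition outcome_with_X :: "real^'p::finite \<Rightarrow> ('p, 'r::finite) outcome" where
  "outcome_with_X x = (0, 0, x, 0, 0)"

lemma obsX_outcome_with_X [simp]: "obsX (outcome_with_X x) = x"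
  unfolding outcome_with_X_def obsX_def by simp

lemma borel_measurable_outcome_with_X [measurable]: "outcome_with_X \<in> borel_measurable borel"
  unfolding outcome_with_X_def[abs_def] by (intro borel_measurable_continuous_onI continuous_intros)

lemma borel_measurable_matrix_vector_mult [measurable]:
  "((*v) (A :: real^'n::finite^'m::finite)) \<in> borel_measurable borel"
  by (intro borel_measurable_continuous_onI matrix_vector_mult_linear_continuous_on)

lemma borel_measurable_obsX [measurable]: "obsX \<in> borel_measurable borel"
  and borel_measurable_obsV [measurable]: "obsV \<in> borel_measurable borel"
  and borel_measurable_obsU [measurable]: "obsU \<in> borel_measurable borel"
  unfolding obsX_def[abs_def] obsV_def[abs_def] obsU_def[abs_def]
  by (intro borel_measurable_continuous_onI continuous_intros)+

lemma measurable_Rt_map [measurable]: "Rt_map Rs \<in> measurable borel (PiM {..<length Rs} (\<lambda>_. borel))"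
  unfolding Rt_map_def[abs_def] by (intro measurable_restrict borel_measurable_continuous_onI continuous_intros)

lemma borel_measurable_Rproj [measurable]: "Rproj Rs \<in> borel_measurable borel"
  unfolding Rproj_def[abs_def] by measurable

locale induced_model =
  fixes f0 :: "real^'p::finite \<Rightarrow> real" and M0 :: "real^'r::finite^'p"
    and \<Lambda> :: "(real \<times> (real^'p)) measure" and N :: "(real^'r) measure"
  assumes f0 [measurable]: "f0 \<in> borel_measurable borel"
    and prob_space_\<Lambda>: "prob_space \<Lambda>" and sets_\<Lambda>: "sets \<Lambda> = sets borel"
    and prob_space_N: "prob_space N" and sets_N [measurable_cong]: "sets N = sets borel"
begin

abbreviation "P \<equiv> induced_dist f0 M0 \<Lambda> N"
abbreviation "T \<equiv> outcome_map f0 M0"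
abbreviation "FX \<equiv> vimage_algebra (space P) obsX borel"
abbreviation "FR Rs \<equiv> vimage_algebra (space P) (\<lambda>w. Rt_map Rs (obsX w)) (PiM {..<length Rs} (\<lambda>_. borel))"

sublocale \<Lambda>: prob_space \<Lambda> by (fact prob_space_\<Lambda>)
sublocale N: prob_space N by (fact prob_space_N)
sublocale \<Lambda>N: pair_prob_space \<Lambda> N ..

lemma sets_\<Lambda>_pair [measurable_cong]: "sets \<Lambda> = sets (borel \<Otimes>\<^sub>M borel)"
  unfolding borel_prod by (fact sets_\<Lambda>)

lemma measurable_outcome_map [measurable]: "T \<in> borel_measurable (\<Lambda> \<Otimes>\<^sub>M N)"
  unfolding outcome_map_def[abs_def] Let_def by measurable

lemma induced_dist_eq_distr: "P = distr (\<Lambda> \<Otimes>\<^sub>M N) borel T"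
  unfolding induced_dist_def outcome_map_def[abs_def]
  by (rule arg_cong[where f="distr (\<Lambda> \<Otimes>\<^sub>M N) borel"]) (auto simp: fun_eq_iff Let_def)

lemma sets_P [simp, measurable_cong]: "sets P = sets borel"
  and space_P [simp]: "space P = UNIV"
  unfolding induced_dist_eq_distr by simp_all

lemma prob_space_P: "prob_space P"
  unfolding induced_dist_eq_distr by (rule \<Lambda>N.prob_space_distr) simp

sublocale P: prob_space P by (fact prob_space_P)

lemma obs_outcome_map [simp]:
  "obsU (T x) = fst (fst x)" "obsV (T x) = snd (fst x)" "obsX (T x) = M0 *v snd x + snd (fst x)"
  unfolding outcome_map_def obsU_def obsV_def obsX_def by (simp_all add: Let_def)

lemma integral_P:
  fixes F :: "('p, 'r) outcome \<Rightarrow> real"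
  assumes [measurable]: "F \<in> borel_measurable borel"
  shows "(\<integral>w. F w \<partial>P) = (\<integral>x. F (T x) \<partial>(\<Lambda> \<Otimes>\<^sub>M N))"
  unfolding induced_dist_eq_distr by (rule integral_distr) auto

lemma integrable_P_iff:
  fixes F :: "('p, 'r) outcome \<Rightarrow> real"
  assumes [measurable]: "F \<in> borel_measurable borel"
  shows "integrable P F \<longleftrightarrow> integrable (\<Lambda> \<Otimes>\<^sub>M N) (\<lambda>x. F (T x))"
  unfolding induced_dist_eq_distr by (rule integrable_distr_eq) auto

lemma integral_P_noise:
  fixes G :: "real \<times> (real^'p) \<Rightarrow> real"
  assumes G: "G \<in> borel_measurable \<Lambda>"
  shows "(\<integral>w. G (obsU w, obsV w) \<partial>P) = (\<integral>x. G x \<partial>\<Lambda>)"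
proof -
  have [measurable]: "G \<in> borel_measurable (borel \<Otimes>\<^sub>M borel)"
    using G by (simp add: measurable_cong_sets[OF sets_\<Lambda>_pair refl])
  have "(\<integral>w. G (obsU w, obsV w) \<partial>P) = (\<integral>x. G (fst x) \<partial>(\<Lambda> \<Otimes>\<^sub>M N))"
    by (simp add: integral_P)
  also have "\<dots> = (\<integral>x. G x \<partial>distr (\<Lambda> \<Otimes>\<^sub>M N) \<Lambda> fst)"
    by (rule integral_distr[symmetric]) measurable
  finally show ?thesis
    by (simp add: N.distr_pair_fst)
qed

lemma integrable_P_noise_iff:
  fixes G :: "real \<times> (real^'p) \<Rightarrow> real"
  assumes G: "G \<in> borel_measurable \<Lambda>"
  shows "integrable P (\<lambda>w. G (obsU w, obsV w)) \<longleftrightarrow> integrable \<Lambda> G"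
proof -
  have [measurable]: "G \<in> borel_measurable (borel \<Otimes>\<^sub>M borel)"
    using G by (simp add: measurable_cong_sets[OF sets_\<Lambda>_pair refl])
  have "integrable P (\<lambda>w. G (obsU w, obsV w)) \<longleftrightarrow> integrable (\<Lambda> \<Otimes>\<^sub>M N) (\<lambda>x. G (fst x))"
    by (simp add: integrable_P_iff)
  also have "\<dots> \<longleftrightarrow> integrable (distr (\<Lambda> \<Otimes>\<^sub>M N) \<Lambda> fst) G"
    by (rule integrable_distr_eq[symmetric]) measurable
  finally show ?thesis
    by (simp add: N.distr_pair_fst)
qed

lemma AE_Rproj_obsX:
  assumes "is_R M0 Rs"
  shows "AE w in P. Rproj Rs (obsX w) = Rproj Rs (obsV w)"
  unfolding induced_dist_eq_distr
  by (subst AE_distr_iff) (auto simp: Rproj_translate[OF assms])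

lemma subalgebra_FX: "subalgebra P FX"
  using sets_image_in_sets[OF refl, of obsX P borel] unfolding subalgebra_def by simp

lemma measurable_FX_obsX: "obsX \<in> measurable FX borel"
  by (rule measurable_vimage_algebra1) simp

lemma subalgebra_FR: "subalgebra FX (FR Rs)"
  using sets_image_in_sets[OF refl measurable_compose[OF measurable_FX_obsX measurable_Rt_map, of Rs]]
  unfolding subalgebra_def by simp

lemma subalgebra_P_FR: "subalgebra P (FR Rs)"
  using subalgebra_FX subalgebra_FR[of Rs] unfolding subalgebra_def by auto

lemma measurable_FR_Rproj_comp:
  assumes [measurable]: "f \<in> borel_measurable borel"
  shows "(\<lambda>w. f (Rproj Rs (obsX w))) \<in> borel_measurable (FR Rs)"
proof -
  have "(\<lambda>w. Rt_map Rs (obsX w)) \<in> measurable (FR Rs) (PiM {..<length Rs} (\<lambda>_. borel))"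
    by (rule measurable_vimage_algebra1) (auto simp: space_PiM Rt_map_def)
  then show ?thesis
    unfolding Rproj_eq_sum_Rt_map by measurable
qed

lemma FX_factor:
  fixes f :: "('p, 'r) outcome \<Rightarrow> real"
  assumes f: "f \<in> borel_measurable FX"
  shows "f w = f (outcome_with_X (obsX w))"
  by (rule measurable_vimage_algebra_fiber[OF f]) auto

lemma FR_factor:
  fixes f :: "('p, 'r) outcome \<Rightarrow> real"
  assumes R: "is_R M0 Rs" and f: "f \<in> borel_measurable (FR Rs)"
  shows "f w = f (outcome_with_X (Rproj Rs (obsX w)))"
  by (rule measurable_vimage_algebra_fiber[OF f])
    (simp_all add: Rt_map_Rproj[OF R], auto simp: space_PiM Rt_map_def)

lemma borel_measurable_P_iff:
  fixes f :: "('p, 'r) outcome \<Rightarrow> real"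
  shows "f \<in> borel_measurable P \<longleftrightarrow> f \<in> borel_measurable borel"
  unfolding measurable_cong_sets[OF sets_P refl] ..

(* E[phi(X) | V = v], as X = M0 Z + V with Z ~ N independent of V. *)
definition mean_given_V :: "(real^'p \<Rightarrow> real) \<Rightarrow> real^'p \<Rightarrow> real" where
  "mean_given_V \<phi> v = (\<integral>z. \<phi> (M0 *v z + v) \<partial>N)"

lemma borel_measurable_mean_given_V [measurable]:
  assumes [measurable]: "\<phi> \<in> borel_measurable borel"
  shows "mean_given_V \<phi> \<in> borel_measurable borel"
  unfolding mean_given_V_def[abs_def] by measurable

lemma abs_mean_given_V_le:
  assumes [measurable]: "\<phi> \<in> borel_measurable borel" and "\<And>x. \<bar>\<phi> x\<bar> \<le> B"
  shows "\<bar>mean_given_V \<phi> v\<bar> \<le> B"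
  unfolding mean_given_V_def using assms(2) by (intro N.abs_integral_le_const) auto

lemma integral_P_obsX_obsV:
  fixes \<phi> d :: "real^'p \<Rightarrow> real"
  assumes [measurable]: "\<phi> \<in> borel_measurable borel" "d \<in> borel_measurable borel"
    and bounds: "\<And>x. \<bar>\<phi> x\<bar> \<le> B" "\<And>v. \<bar>d v\<bar> \<le> C"
  shows "(\<integral>w. \<phi> (obsX w) * d (obsV w) \<partial>P) = (\<integral>x. mean_given_V \<phi> (snd x) * d (snd x) \<partial>\<Lambda>)"
proof -
  have "\<bar>\<phi> (M0 *v snd x + snd (fst x)) * d (snd (fst x))\<bar> \<le> B * C" for x :: "(real \<times> (real^'p)) \<times> (real^'r)"
    unfolding abs_mult using bounds by (intro mult_mono) (auto intro: order_trans[OF abs_ge_zero])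
  then have "integrable (\<Lambda> \<Otimes>\<^sub>M N) (\<lambda>x. \<phi> (M0 *v snd x + snd (fst x)) * d (snd (fst x)))"
    by (intro \<Lambda>N.integrable_const_bound[where B="B * C"]) auto
  from \<Lambda>N.integral_fst'[OF this] show ?thesis
    by (simp add: integral_P mean_given_V_def)
qed

lemma mean_given_V_Rproj_diff_le:
  fixes \<phi> :: "real^'p \<Rightarrow> real"
  assumes a: "\<And>v. M0 *v a v = v - Rproj Rs v" and \<delta>: "translation_modulus N \<delta>"
    and [measurable]: "\<phi> \<in> borel_measurable borel" and \<phi>: "\<And>x. \<bar>\<phi> x\<bar> \<le> B"
  shows "\<bar>mean_given_V \<phi> v - mean_given_V \<phi> (Rproj Rs v)\<bar> \<le> min (2 * B) (B * \<delta> (a v))"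
proof -
  have "M0 *v (z + a v) + Rproj Rs v = M0 *v z + v" for z
    by (simp add: matrix_vector_right_distrib a)
  then have "\<bar>mean_given_V \<phi> v - mean_given_V \<phi> (Rproj Rs v)\<bar> \<le> B * \<delta> (a v)"
    using \<delta>[unfolded translation_modulus_def, rule_format, of "\<lambda>z. \<phi> (M0 *v z + Rproj Rs v)" B "a v"] \<phi>
    by (simp add: mean_given_V_def)
  moreover have "\<bar>mean_given_V \<phi> w\<bar> \<le> B" for w
    by (rule abs_mean_given_V_le) (simp_all add: \<phi>)
  ultimately show ?thesis
    using abs_triangle_ineq4[of "mean_given_V \<phi> v" "mean_given_V \<phi> (Rproj Rs v)"]
    unfolding min.bounded_iff by (smt (verit))
qed

lemma mean_given_V_residual:
  fixes \<phi> :: "real^'p \<Rightarrow> real"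
  assumes R: "is_R M0 Rs" and [measurable]: "\<phi> \<in> borel_measurable borel" and \<phi>: "\<And>x. \<bar>\<phi> x\<bar> \<le> B"
  shows "mean_given_V (\<lambda>x. \<phi> x - mean_given_V \<phi> (Rproj Rs x)) v = mean_given_V \<phi> v - mean_given_V \<phi> (Rproj Rs v)"
proof -
  have "integrable N (\<lambda>z. \<phi> (M0 *v z + v))"
    using \<phi> by (intro N.integrable_const_bound[where B=B]) auto
  then show ?thesis
    unfolding mean_given_V_def[of "\<lambda>x. \<phi> x - mean_given_V \<phi> (Rproj Rs x)"] Rproj_translate[OF R]
    by (simp add: N.prob_space mean_given_V_def)
qed

lemma integral_mean_given_V_residual_le:
  fixes \<phi> d :: "real^'p \<Rightarrow> real"
  assumes a: "\<And>v. M0 *v a v = v - Rproj Rs v" "a \<in> borel_measurable borel"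
    and \<delta>: "translation_modulus N \<delta>" "\<delta> \<in> borel_measurable borel"
    and [measurable]: "\<phi> \<in> borel_measurable borel" "d \<in> borel_measurable borel"
    and \<phi>: "\<And>x. \<bar>\<phi> x\<bar> \<le> B" and d: "\<And>v. \<bar>d v\<bar> \<le> C"
  shows "(\<integral>x. (mean_given_V \<phi> (snd x) - mean_given_V \<phi> (Rproj Rs (snd x))) * d (snd x) \<partial>\<Lambda>)
    \<le> (\<integral>x. C * min (2 * B) (B * \<delta> (a (snd x))) \<partial>\<Lambda>)"
    (is "(\<integral>x. ?r (snd x) \<partial>\<Lambda>) \<le> (\<integral>x. ?b (snd x) \<partial>\<Lambda>)")
proof (rule integral_mono)
  have [measurable]: "a \<in> borel_measurable borel" "\<delta> \<in> borel_measurable borel"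
    using a \<delta> by simp_all
  have B: "0 \<le> B" and C: "0 \<le> C"
    using \<phi>[of 0] d[of 0] by linarith+
  have pointwise: "\<bar>?r v\<bar> \<le> ?b v" for v
    unfolding abs_mult using mean_given_V_Rproj_diff_le[OF a(1) \<delta>(1) _ \<phi>, where v=v] d[of v]
    by (simp add: mult.commute mult_mono)
  have "0 \<le> min (2 * B) (B * \<delta> (a v))" for v
    using B translation_modulus_nonneg[OF \<delta>(1)] by simp
  then have "\<bar>?b v\<bar> \<le> C * (2 * B)" for v
    using C by (simp add: mult_left_mono)
  then show "integrable \<Lambda> (\<lambda>x. ?b (snd x))"
    by (intro \<Lambda>.integrable_const_bound[where B="C * (2 * B)"] AE_I2) auto
  have "\<bar>?r v\<bar> \<le> C * (2 * B)" for v
    using order_trans[OF pointwise mult_left_mono[OF min.cobounded1 C]] .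
  then show "integrable \<Lambda> (\<lambda>x. ?r (snd x))"
    by (intro \<Lambda>.integrable_const_bound[where B="C * (2 * B)"] AE_I2) auto
  show "?r (snd x) \<le> ?b (snd x)" for x
    using pointwise[of "snd x"] by simp
qed

lemma bounded_cond_exp_versions:
  fixes H :: "('p, 'r) outcome \<Rightarrow> real"
  assumes R: "is_R M0 Rs" and [measurable]: "H \<in> borel_measurable P" and H: "\<And>w. \<bar>H w\<bar> \<le> c"
  obtains \<psi> \<phi> :: "real^'p \<Rightarrow> real"
  where "\<psi> \<in> borel_measurable borel" "\<And>x. \<bar>\<psi> x\<bar> \<le> c"
    "AE w in P. \<psi> (Rproj Rs (obsX w)) = real_cond_exp P (FR Rs) H w"
    and "\<phi> \<in> borel_measurable borel" "\<And>x. \<bar>\<phi> x\<bar> \<le> 2 * c"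
    "AE w in P. \<phi> (obsX w) = real_cond_exp P FX (\<lambda>w. H w - \<psi> (Rproj Rs (obsX w))) w"
proof -
  interpret FX: finite_measure_subalgebra P FX by unfold_locales (fact subalgebra_FX)
  interpret FR: finite_measure_subalgebra P "FR Rs" by unfold_locales (fact subalgebra_P_FR)
  have "integrable P H"
    using H by (intro P.integrable_const_bound[where B=c]) auto
  then obtain Y where Y_meas: "Y \<in> borel_measurable (FR Rs)" and Y: "\<And>w. \<bar>Y w\<bar> \<le> c"
    and Y_ce: "AE w in P. Y w = real_cond_exp P (FR Rs) H w"
    using FR.real_cond_exp_bounded_version H by blast
  define \<psi> where "\<psi> x = Y (outcome_with_X x)" for x
  have "Y \<in> borel_measurable borel"
    using measurable_from_subalg[OF subalgebra_P_FR Y_meas] by (simp only: borel_measurable_P_iff)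
  then have \<psi>_meas [measurable]: "\<psi> \<in> borel_measurable borel"
    unfolding \<psi>_def[abs_def] by measurable
  have Y_eq: "Y w = \<psi> (Rproj Rs (obsX w))" for w
    unfolding \<psi>_def by (rule FR_factor[OF R Y_meas])
  have HY: "\<bar>H w - \<psi> (Rproj Rs (obsX w))\<bar> \<le> 2 * c" for w
    using H[of w] Y[of w] by (simp add: Y_eq)
  then have "integrable P (\<lambda>w. H w - \<psi> (Rproj Rs (obsX w)))"
    by (intro P.integrable_const_bound[where B="2 * c"]) auto
  then obtain Q where Q_meas: "Q \<in> borel_measurable FX" and Q: "\<And>w. \<bar>Q w\<bar> \<le> 2 * c"
    and Q_ce: "AE w in P. Q w = real_cond_exp P FX (\<lambda>w. H w - \<psi> (Rproj Rs (obsX w))) w"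
    using FX.real_cond_exp_bounded_version HY by blast
  define \<phi> where "\<phi> x = Q (outcome_with_X x)" for x
  have "Q \<in> borel_measurable borel"
    using measurable_from_subalg[OF subalgebra_FX Q_meas] by (simp only: borel_measurable_P_iff)
  then have "\<phi> \<in> borel_measurable borel"
    unfolding \<phi>_def[abs_def] by measurable
  moreover have "Q w = \<phi> (obsX w)" for w
    unfolding \<phi>_def by (rule FX_factor[OF Q_meas])
  ultimately show ?thesis
  proof (intro that[of \<psi> \<phi>])
    show "\<bar>\<psi> x\<bar> \<le> c" and "\<bar>\<phi> x\<bar> \<le> 2 * c" for x
      by (simp_all add: \<psi>_def \<phi>_def Y Q)
    show "AE w in P. \<psi> (Rproj Rs (obsX w)) = real_cond_exp P (FR Rs) H w"
      using Y_ce by (simp add: Y_eq)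
  qed (use Q_ce in simp_all)
qed

lemma cond_exp_gap_bounded_le:
  fixes h :: "real^'p \<Rightarrow> real"
  assumes R: "is_R M0 Rs" and a: "\<And>v. M0 *v a v = v - Rproj Rs v" "a \<in> borel_measurable borel"
    and \<delta>: "translation_modulus N \<delta>" "\<delta> \<in> borel_measurable borel"
    and [measurable]: "h \<in> borel_measurable borel" and h: "\<And>v. \<bar>h v\<bar> \<le> c"
  shows "cond_exp_gap P (FR Rs) FX (\<lambda>w. h (obsV w))
    \<le> (\<integral>x. 2 * c * min (4 * c) (2 * c * \<delta> (a (snd x))) \<partial>\<Lambda>)"
proof -
  define H :: "('p, 'r) outcome \<Rightarrow> real" where "H w = h (obsV w)" for w
  have H_meas [measurable]: "H \<in> borel_measurable P" and H: "\<bar>H w\<bar> \<le> c" for w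
    unfolding H_def borel_measurable_P_iff by (measurable, rule h)
  obtain \<psi> \<phi> where \<psi>_meas [measurable]: "\<psi> \<in> borel_measurable borel" and \<psi>: "\<And>x. \<bar>\<psi> x\<bar> \<le> c"
    and \<psi>_ce: "AE w in P. \<psi> (Rproj Rs (obsX w)) = real_cond_exp P (FR Rs) H w"
    and \<phi>_meas [measurable]: "\<phi> \<in> borel_measurable borel" and \<phi>: "\<And>x. \<bar>\<phi> x\<bar> \<le> 2 * c"
    and \<phi>_ce: "AE w in P. \<phi> (obsX w) = real_cond_exp P FX (\<lambda>w. H w - \<psi> (Rproj Rs (obsX w))) w"
    using bounded_cond_exp_versions[OF R H_meas H] by blast
  define d where "d v = h v - \<psi> (Rproj Rs v)" for v
  have [measurable]: "d \<in> borel_measurable borel"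
    unfolding d_def[abs_def] by measurable
  have c: "0 \<le> c"
    using h[of 0] by linarith
  have d: "\<bar>d v\<bar> \<le> 2 * c" for v
    using abs_triangle_ineq4[of "h v" "\<psi> (Rproj Rs v)"] h[of v] \<psi>[of "Rproj Rs v"] unfolding d_def by linarith
  have H2: "\<bar>H w\<bar> \<le> 2 * c" and \<psi>2: "\<bar>\<psi> x\<bar> \<le> 2 * c" for w x
    using H[of w] \<psi>[of x] c by linarith+
  have mean_\<phi>: "\<bar>mean_given_V \<phi> x\<bar> \<le> 2 * c" for x
    by (rule abs_mean_given_V_le) (simp_all add: \<phi>)
  have \<phi>_res: "\<bar>\<phi> x - mean_given_V \<phi> (Rproj Rs x)\<bar> \<le> 4 * c" for x
    using abs_triangle_ineq4[of "\<phi> x" "mean_given_V \<phi> (Rproj Rs x)"] \<phi>[of x] mean_\<phi>[of "Rproj Rs x"] by simp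
  have FR_meas: "(\<lambda>w. \<psi> (Rproj Rs (obsX w))) \<in> borel_measurable (FR Rs)"
      "(\<lambda>w. mean_given_V \<phi> (Rproj Rs (obsX w))) \<in> borel_measurable (FR Rs)"
    by (rule measurable_FR_Rproj_comp[OF \<psi>_meas],
        rule measurable_FR_Rproj_comp[OF borel_measurable_mean_given_V[OF \<phi>_meas]])
  have FX_meas: "(\<lambda>w. \<phi> (obsX w)) \<in> borel_measurable FX"
    by (rule measurable_compose[OF measurable_FX_obsX \<phi>_meas])
  (* The function of R^T X subtracted from phi(X) is the smoothing of phi at R R^T X: once Z is
     integrated out, only the translation of the instrument by M0 a(v) remains. *)
  have "cond_exp_gap P (FR Rs) FX H = (\<integral>w. (\<phi> (obsX w) - mean_given_V \<phi> (Rproj Rs (obsX w)))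
      * (H w - \<psi> (Rproj Rs (obsX w))) \<partial>P)"
    by (rule P.cond_exp_gap_eq_integral_residual[OF subalgebra_FX subalgebra_FR H_meas FR_meas(1) FX_meas
          FR_meas(2) H2 \<psi>2 \<phi> mean_\<phi> \<psi>_ce \<phi>_ce])
  also have "\<dots> = (\<integral>w. (\<phi> (obsX w) - mean_given_V \<phi> (Rproj Rs (obsX w))) * d (obsV w) \<partial>P)"
    using AE_Rproj_obsX[OF R] by (intro integral_cong_AE) (auto simp: H_def d_def)
  also have "\<dots> = (\<integral>x. (mean_given_V \<phi> (snd x) - mean_given_V \<phi> (Rproj Rs (snd x))) * d (snd x) \<partial>\<Lambda>)"
    by (subst integral_P_obsX_obsV[OF _ _ \<phi>_res d]) (simp_all add: mean_given_V_residual[OF R _ \<phi>])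
  also have "\<dots> \<le> (\<integral>x. 2 * c * min (2 * (2 * c)) (2 * c * \<delta> (a (snd x))) \<partial>\<Lambda>)"
    by (rule integral_mean_given_V_residual_le[OF a \<delta> _ _ \<phi> d]) simp_all
  finally show ?thesis
    by (simp add: H_def[abs_def])
qed

lemma crit_eq_cond_exp_gap: "crit Rs g P = cond_exp_gap P (FR Rs) FX (\<lambda>w. g (obsV w))"
  unfolding crit_def cond_exp_gap_def ..

lemma square_integrable_of_cond_exp_U:
  fixes \<gamma> :: "real^'p \<Rightarrow> real"
  assumes L2: "integrable \<Lambda> (\<lambda>w. (norm w)\<^sup>2)" and [measurable]: "\<gamma> \<in> borel_measurable borel"
    and \<gamma>: "AE w in P. \<gamma> (obsV w) = real_cond_exp P (vimage_algebra (space P) obsV borel) obsU w"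
  shows "integrable \<Lambda> (\<lambda>x. (\<gamma> (snd x))\<^sup>2)"
proof -
  interpret FV: finite_measure_subalgebra P "vimage_algebra (space P) obsV borel"
    by unfold_locales (use sets_image_in_sets[OF refl, of obsV P borel] in \<open>simp add: subalgebra_def\<close>)
  have "norm ((fst x)\<^sup>2) \<le> norm ((norm x)\<^sup>2)" for x :: "real \<times> (real^'p)"
    using norm_fst_le[of "fst x" "snd x"] by (simp add: abs_le_square_iff[symmetric])
  then have "integrable \<Lambda> (\<lambda>x. (fst x)\<^sup>2)"
    by (intro Bochner_Integration.integrable_bound[OF L2] AE_I2) auto
  then have "integrable P (\<lambda>w. (obsU w)\<^sup>2)"
    by (subst integrable_P_noise_iff[of "\<lambda>x. (fst x)\<^sup>2", simplified]) simp_all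
  then have "integrable P (\<lambda>w. (real_cond_exp P (vimage_algebra (space P) obsV borel) obsU w)\<^sup>2)"
    by (rule FV.real_cond_exp_square_integrable(1)[rotated]) (simp add: borel_measurable_P_iff)
  then have "integrable P (\<lambda>w. (\<gamma> (obsV w))\<^sup>2)"
    by (rule integrable_cong_AE_imp) (use \<gamma> in \<open>auto simp: borel_measurable_P_iff\<close>)
  then show ?thesis
    by (subst (asm) integrable_P_noise_iff[of "\<lambda>x. (\<gamma> (snd x))\<^sup>2", simplified]) simp_all
qed

lemma crit_le_bounded_approx:
  fixes g h :: "real^'p \<Rightarrow> real"
  assumes R: "is_R M0 Rs" and a: "\<And>v. M0 *v a v = v - Rproj Rs v" "a \<in> borel_measurable borel"
    and \<delta>: "translation_modulus N \<delta>" "\<delta> \<in> borel_measurable borel"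
    and [measurable]: "g \<in> borel_measurable borel" and g2: "integrable \<Lambda> (\<lambda>x. (g (snd x))\<^sup>2)"
    and [measurable]: "h \<in> borel_measurable borel" and h: "\<And>v. \<bar>h v\<bar> \<le> c"
  shows "crit Rs g P \<le> 2 * (\<integral>x. 2 * c * min (4 * c) (2 * c * \<delta> (a (snd x))) \<partial>\<Lambda>)
    + 8 * (\<integral>x. (g (snd x) - h (snd x))\<^sup>2 \<partial>\<Lambda>)"
proof -
  have [measurable]: "(\<lambda>w. g (obsV w)) \<in> borel_measurable P" "(\<lambda>w. h (obsV w)) \<in> borel_measurable P"
    by (simp_all add: borel_measurable_P_iff)
  have "integrable P (\<lambda>w. (g (obsV w))\<^sup>2)"
    using g2 by (subst integrable_P_noise_iff[of "\<lambda>x. (g (snd x))\<^sup>2", simplified]) simp_all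
  moreover have "integrable P (\<lambda>w. (h (obsV w))\<^sup>2)"
    using h by (intro P.integrable_const_bound[where B="c\<^sup>2"] AE_I2)
      (auto simp: abs_le_square_iff[symmetric] intro: order_trans[OF _ abs_ge_self])
  ultimately have "crit Rs g P \<le> 2 * cond_exp_gap P (FR Rs) FX (\<lambda>w. h (obsV w))
      + 8 * (\<integral>w. (g (obsV w) - h (obsV w))\<^sup>2 \<partial>P)"
    unfolding crit_eq_cond_exp_gap
    by (intro P.cond_exp_gap_perturb_le subalgebra_P_FR subalgebra_FX) simp_all
  also have "(\<integral>w. (g (obsV w) - h (obsV w))\<^sup>2 \<partial>P) = (\<integral>x. (g (snd x) - h (snd x))\<^sup>2 \<partial>\<Lambda>)"
    by (subst integral_P_noise[of "\<lambda>x. (g (snd x) - h (snd x))\<^sup>2", simplified]) simp_all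
  finally have "crit Rs g P \<le> 2 * cond_exp_gap P (FR Rs) FX (\<lambda>w. h (obsV w))
      + 8 * (\<integral>x. (g (snd x) - h (snd x))\<^sup>2 \<partial>\<Lambda>)" .
  moreover have "cond_exp_gap P (FR Rs) FX (\<lambda>w. h (obsV w))
      \<le> (\<integral>x. 2 * c * min (4 * c) (2 * c * \<delta> (a (snd x))) \<partial>\<Lambda>)"
    by (rule cond_exp_gap_bounded_le[OF R a \<delta>]) (simp_all add: h)
  ultimately show ?thesis
    by linarith
qed

end

section \<open>Approximation along Gaussian instruments\<close>

lemma INF_eq_zero_if_arbitrarily_small:
  fixes f :: "'a \<Rightarrow> real"
  assumes nonneg: "\<And>x. x \<in> S \<Longrightarrow> 0 \<le> f x" and approx: "\<And>e. e > 0 \<Longrightarrow> \<exists>x\<in>S. f x \<le> e"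
  shows "(INF x\<in>S. f x) = 0"
proof (rule antisym)
  have "S \<noteq> {}"
    using approx[of 1] by auto
  have bdd: "bdd_below (f ` S)"
    using nonneg by (intro bdd_belowI[where m=0]) auto
  show "(INF x\<in>S. f x) \<le> 0"
  proof (rule field_le_epsilon)
    fix e :: real assume "e > 0"
    then obtain x where "x \<in> S" "f x \<le> e"
      using approx by blast
    then show "(INF x\<in>S. f x) \<le> 0 + e"
      using cINF_lower[OF bdd] by fastforce
  qed
  show "0 \<le> (INF x\<in>S. f x)"
    using nonneg \<open>S \<noteq> {}\<close> by (intro cINF_greatest) auto
qed

lemma exists_gauss_iso_crit_le:
  fixes f0 :: "real^'p::finite \<Rightarrow> real" and M0 :: "real^'r::finite^'p"
    and \<Lambda> :: "(real \<times> (real^'p)) measure" and \<gamma> :: "real^'p \<Rightarrow> real"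
  assumes [measurable]: "f0 \<in> borel_measurable borel" and \<Lambda>: "prob_space \<Lambda>" "sets \<Lambda> = sets borel"
    and gauss: "\<And>k::nat. k \<ge> 1 \<Longrightarrow> prob_space (gauss_iso (real k) :: (real^'r) measure)"
    and R: "is_R M0 Rs"
    and [measurable]: "\<gamma> \<in> borel_measurable borel" and \<gamma>2: "integrable \<Lambda> (\<lambda>x. (\<gamma> (snd x))\<^sup>2)"
    and e: "e > 0"
  shows "\<exists>k\<ge>1. crit Rs \<gamma> (induced_dist f0 M0 \<Lambda> (gauss_iso (real k))) \<le> e"
proof -
  interpret \<Lambda>: prob_space \<Lambda> by (fact \<Lambda>(1))
  have [measurable_cong]: "sets \<Lambda> = sets (borel \<Otimes>\<^sub>M borel)"
    unfolding borel_prod by (fact \<Lambda>(2))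
  obtain a where "linear a" and a: "\<And>v. M0 *v a v = v - Rproj Rs v"
    using exists_linear_preimage_diff_Rproj[OF R] by blast
  have [measurable]: "a \<in> borel_measurable borel"
    using \<open>linear a\<close> by (intro borel_measurable_continuous_onI linear_continuous_on linear_conv_bounded_linear[THEN iffD1])
  define trunc_err where
    "trunc_err n = (\<integral>x. (\<gamma> (snd x) - max (- real n) (min (real n) (\<gamma> (snd x))))\<^sup>2 \<partial>\<Lambda>)" for n
  define gauss_err where "gauss_err n k = (\<integral>x. 2 * real n * min (4 * real n)
    (2 * real n * gauss_shift_modulus (real (Suc k)) (a (snd x))) \<partial>\<Lambda>)" for n k
  have "trunc_err \<longlonglongrightarrow> 0"
    unfolding trunc_err_def[abs_def] by (rule tendsto_integral_truncation_error[OF _ \<gamma>2]) measurable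
  from order_tendstoD(2)[OF this, of "e / 16"] obtain n where n: "trunc_err n < e / 16"
    using e by (auto simp: eventually_sequentially intro: order_refl)
  have "gauss_err n \<longlonglongrightarrow> 0"
    unfolding gauss_err_def[abs_def]
    by (intro \<Lambda>.tendsto_integral_mult_min tendsto_mult_right_zero tendsto_gauss_shift_modulus)
      (simp_all add: gauss_shift_modulus_nonneg)
  from order_tendstoD(2)[OF this, of "e / 4"] obtain k where k: "gauss_err n k < e / 4"
    using e by (auto simp: eventually_sequentially intro: order_refl)
  have gauss_k: "prob_space (gauss_iso (real (Suc k)) :: (real^'r) measure)"
    using gauss[of "Suc k"] by simp
  interpret induced_model f0 M0 \<Lambda> "gauss_iso (real (Suc k))"
    by (rule induced_model.intro) (simp_all only: gauss_k \<Lambda>, simp_all add: gauss_iso_eq_density)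
  have "crit Rs \<gamma> (induced_dist f0 M0 \<Lambda> (gauss_iso (real (Suc k)))) \<le> 2 * gauss_err n k + 8 * trunc_err n"
    unfolding gauss_err_def trunc_err_def
    by (rule crit_le_bounded_approx[OF R a _ translation_modulus_gauss_iso[OF _ gauss_k]]) (simp_all add: \<gamma>2)
  then show ?thesis
    using n k by (intro exI[of _ "Suc k"]) simp
qed

theorem proposition5:
  fixes f0 :: "real^'p::finite \<Rightarrow> real"
    and M0 :: "real^'r::finite^'p"
    and \<Lambda>0 :: "(real \<times> (real^'p)) measure"
    and Q0 :: "(real^'r) measure set"
    and Qtr :: "(real^'r) measure"
    and Rs :: "(real^'p) list"
    and \<gamma>0 :: "real^'p \<Rightarrow> real"
  assumes simdg: "simdg f0 M0 \<Lambda>0 Q0"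
    and bdd_f0: "\<exists>C. \<forall>P\<in>induced_set f0 M0 \<Lambda>0 Q0.
                   integrable P (\<lambda>w. (f0 (obsX w))\<^sup>2) \<and> (\<integral>w. (f0 (obsX w))\<^sup>2 \<partial>P) \<le> C"
    and Qtr: "Qtr \<in> Q0"
    and Qtr_mean: "integrable Qtr (\<lambda>z. z) \<and> (\<integral>z. z \<partial>Qtr) = 0"
    and Qtr_cov: "(\<forall>i j. integrable Qtr (\<lambda>z. z $ i * z $ j)) \<and>
                  (\<forall>a::real^'r. a \<noteq> 0 \<longrightarrow> (\<integral>z. (a \<bullet> z)\<^sup>2 \<partial>Qtr) > 0)"
    and R: "is_R M0 Rs"
    and \<gamma>0_meas: "\<gamma>0 \<in> borel_measurable borel"
    and \<gamma>0: "AE w in induced_dist f0 M0 \<Lambda>0 Qtr.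
               \<gamma>0 (obsV w) = real_cond_exp (induced_dist f0 M0 \<Lambda>0 Qtr)
                  (vimage_algebra (space (induced_dist f0 M0 \<Lambda>0 Qtr)) obsV borel) obsU w"
    and gauss: "\<forall>k::nat. k \<ge> 1 \<longrightarrow> gauss_iso (real k) \<in> Q0"
    and cases: "(absolutely_continuous lborel (distr \<Lambda>0 borel snd) \<and>
                 (\<exists>B. AE w in \<Lambda>0. \<bar>\<gamma>0 (snd w)\<bar> \<le> B))
                \<or> centered_nondeg_gaussian \<Lambda>0"
  shows "(INF P\<in>induced_set f0 M0 \<Lambda>0 Q0. crit Rs \<gamma>0 P) = 0"
proof -
  note model = simdg[unfolded simdg_def]
  have f0: "f0 \<in> borel_measurable borel" and \<Lambda>0: "prob_space \<Lambda>0" "sets \<Lambda>0 = sets borel"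
    and L2: "integrable \<Lambda>0 (\<lambda>w. (norm w)\<^sup>2)" and Q0: "\<And>Q. Q \<in> Q0 \<Longrightarrow> prob_space Q \<and> sets Q = sets borel"
    using model by blast+
  interpret training: induced_model f0 M0 \<Lambda>0 Qtr
    using Q0[OF Qtr] by (intro induced_model.intro) (simp_all add: f0 \<Lambda>0)
  have gauss_prob: "prob_space (gauss_iso (real k) :: (real^'r) measure)" if "k \<ge> 1" for k :: nat
    using Q0 gauss that by blast
  have \<gamma>2: "integrable \<Lambda>0 (\<lambda>x. (\<gamma>0 (snd x))\<^sup>2)"
    by (rule training.square_integrable_of_cond_exp_U[OF L2 \<gamma>0_meas \<gamma>0])
  show ?thesis
  proof (rule INF_eq_zero_if_arbitrarily_small)
    show "0 \<le> crit Rs \<gamma>0 P" for P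
      unfolding crit_def by simp
    fix e :: real assume "e > 0"
    then obtain k where "k \<ge> 1" "crit Rs \<gamma>0 (induced_dist f0 M0 \<Lambda>0 (gauss_iso (real k))) \<le> e"
      using exists_gauss_iso_crit_le[OF f0 \<Lambda>0 gauss_prob R \<gamma>0_meas \<gamma>2] by blast
    then show "\<exists>P\<in>induced_set f0 M0 \<Lambda>0 Q0. crit Rs \<gamma>0 P \<le> e"
      using gauss unfolding induced_set_def by blast
  qed
qed

end
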